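(* Let $(\Phi,\mathtt{Prg},\mathrm{AT})$ be a CLC SPL with $\Phi=(\mathcal F,\phi)$. If $\phi\vdash\mathtt{Prg}\ \textsc{ok}$ (family-based typing), then $\vdash\mathtt{Prg}\ \textsc{ok}$ (LC typing), i.e. the code base is a well-typed LC program.
   Context: **Lightweight C (LC).** Types: $T ::= \mathtt{int}\mid \mathtt{void}* \mid \mathtt{struct}\ s*$ ($s$ a struct name). Expressions: $e ::= n$ (integer literal) $\mid \mathtt{NULL}\mid x$ (parameter name) $\mid f(e_1,\dots,e_k)$ ($k\ge0$) $\mid e\texttt{->}m \mid e\texttt{->}m=e \mid e\,?\,e:e \mid (e_1,\dots,e_k)$ ($k\ge1$, a parenthesized expression sequence) $\mid \mathsf{uop}\ e\mid e\ \mathsf{bop}\ e\mid \mathtt{MALLOC}(\mathtt{struct}\ s)\mid \mathtt{MFREE}(e)$. A struct definition is $\mathtt{struct}\ s\{T_1\,m_1;\dots;T_k\,m_k;\};$ (distinct member names); a function definition is $T_0\ f(T_1\,x_1,\dots,T_k\,x_k)\{\mathtt{return}\ e;\}$ (distinct parameter names); a program $\mathtt{Prg}=\overline{SD}\ \overline{FD}$ is a sequence of struct definitions followed by a sequence of function definitions, with distinct struct names and distinct function names. $\mathtt{Prg}$ is regarded as a finite map: $\mathtt{Prg}(s)$ is the definition of struct $s$, $\mathtt{Prg}(s)(m)=$ "$T\ m$" is the declaration of member $m$ in it, $\mathtt{Prg}(f)$ is the definition of function $f$; $\mathrm{dom}(\overline{SD})$ is the set of defined struct names. $\mathtt{Prg}$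 is *sane* if (1) every struct name occurring anywhere in $\mathtt{Prg}$ is defined in $\mathtt{Prg}$, (2) every function name occurring in the function definitions is defined in $\mathtt{Prg}$, (3) $\mathtt{Prg}(\mathtt{main})=\mathtt{int\ main}()\{\mathtt{return}\ e;\}$ for some $e$. Operator types: unary $-:(\mathtt{int})\to\mathtt{int}$; unary $!:(T)\to\mathtt{int}$ for every type $T$; binary $+,-,*,/,\&\&,||,<,<=,>,>=:(\mathtt{int},\mathtt{int})\to\mathtt{int}$; binary $==,!=:(T,T)\to\mathtt{int}$ for every type $T$. Subtyping $\le$ is the reflexive closure of $\mathtt{void}*\le\mathtt{struct}\ s*$ for every struct $s$ defined in the program; $\max_\le\{T_1,T_2\}$ is the greater of two $\le$-comparable types. LC typing ($\Gamma$ a finite map from parameter names to types): (T-prg) if $\mathtt{Prg}$ is sane, $\mathtt{Prg}=\overline{SD}\,\overline{FD}$ and $\vdash FD\ \textsc{ok}$ for every $FD$ in $\overline{FD}$, then $\vdash\mathtt{Prg}\ \textsc{ok}$. (T-fun) if $x_1{:}T_1,\dots,x_k{:}T_k\vdash e:T'$ and $T'\le T_0$ then $\vdash T_0\,f(T_1x_1,\dots,T_kx_k)\{\mathtt{return}\ e;\}\ \textsc{ok}$. (T-int) $\Gamma\vdash n:\mathtt{int}$. (T-null) $\Gamma\vdash\mathtt{NULL}:\mathtt{void}*$. (T-par) if $x{:}T\in\Gamma$ then $\Gamma\vdash x:T$. (T-app) if $\mathtt{Prg}(f)=T_0\,f(T_1x_1,\dots,T_kx_k)\{\dots\}$, and $\Gamma\vdash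 e_i:T_i'$, $T_i'\le T_i$ for $i=1..k$ (exactly $k$ arguments), then $\Gamma\vdash f(e_1,\dots,e_k):T_0$. (T-member) if $\Gamma\vdash e_0:\mathtt{struct}\ s*$ and $\mathtt{Prg}(s)(m)=T\,m$ then $\Gamma\vdash e_0\texttt{->}m:T$. (T-assign) if additionally $\Gamma\vdash e_1:T_1$, $T_1\le T$, then $\Gamma\vdash e_0\texttt{->}m=e_1:T$. (T-cond) if $\Gamma\vdash e_j:T_j$ ($j=0,1,2$) and $T_3=\max_\le\{T_1,T_2\}$ then $\Gamma\vdash e_0?e_1:e_2:T_3$. (T-seq) if $\Gamma\vdash e_i:T_i$ for $i=1..n$ then $\Gamma\vdash(e_1,\dots,e_n):T_n$. (T-uop) if $\Gamma\vdash e_0:T_0$ and $\mathsf{uop}$ has type $(T_0)\to\mathtt{int}$ then $\Gamma\vdash\mathsf{uop}\,e_0:\mathtt{int}$. (T-bop) if $\Gamma\vdash e_1:T_1$, $\Gamma\vdash e_2:T_2$, $T_3=\max_\le\{T_1,T_2\}$ and $\mathsf{bop}$ has type $(T_3,T_3)\to\mathtt{int}$ then $\Gamma\vdash e_1\,\mathsf{bop}\,e_2:\mathtt{int}$. (T-malloc) if $s\in\mathrm{dom}(\overline{SD})$ then $\Gamma\vdash\mathtt{MALLOC}(\mathtt{struct}\ s):\mathtt{struct}\ s*$. (T-mfree) if $\Gamma\vdash e_0:\mathtt{struct}\ s*$ then $\Gamma\vdash\mathtt{MFREE}(e_0):\mathtt{void}*$. **Colored LC (CLC).** A feature model $\Phi=(\mathcal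 F,\phi)$: $\mathcal F$ a finite set of features, $\phi$ a propositional formula over $\mathcal F$ (connectives $!,\&\&,||$, constants $0,1$). For formulas, $\theta\models\theta'$ means $\theta\Rightarrow\theta'$ is valid; $\psi_1\Rightarrow\psi_2$ abbreviates $!\psi_1||\psi_2$ and $\psi_1\Leftrightarrow\psi_2$ the conjunction of both implications. An SPL is a triple $(\Phi,\mathtt{Prg},\mathrm{AT})$ with $\mathtt{Prg}$ an LC program (the code base) and $\mathrm{AT}$ an annotation table assigning a propositional formula over $\mathcal F$ to each occurrence of an annotable fragment of $\mathtt{Prg}$; annotable fragments are: each struct definition, each member declaration $T\,m$, each function definition, each formal parameter declaration $T\,x$, each argument of a function call, and each element of a parenthesized sequence. Occurrences not explicitly annotated have annotation $1$. Abbreviations: $\mathrm{AT}(s)=\mathrm{AT}(\mathtt{Prg}(s))$ is the annotation of the definition of struct $s$, $\mathrm{AT}(f)=\mathrm{AT}(\mathtt{Prg}(f))$ that of function $f$; $\mathrm{AT}(\mathtt{int})=\mathrm{AT}(\mathtt{void}* )=1$, $\mathrm{AT}(\mathtt{struct}\ s* )=\mathrm{AT}(\mathtt{Prg}(s))$; $\exists(e_1,\dots,e_n)=\mathrm{AT}(e_1)||\cdots||\mathrm{AT}(e_n)$; $\mathtt{neverLast}(k,(e_1,\dots,e_n))=\,!\mathrm{AT}(e_k)||\mathrm{AT}(e_{k+1})||\cdots||\mathrm{AT}(e_n)$. An annotated type environment $\Delta$ maps parameter names to pairs written $x{:}T$ with $\psi$. Family-based typing: (FT-prg) if $\mathtt{Prg}$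 is sane, $\mathrm{AT}(\mathtt{main})=1$, $\mathtt{Prg}=\overline{SD}\,\overline{FD}$, $\phi\,\&\&\,\mathrm{AT}(SD)\vdash SD\ \textsc{ok}$ for each $SD$ in $\overline{SD}$ and $\phi\,\&\&\,\mathrm{AT}(FD)\vdash FD\ \textsc{ok}$ for each $FD$ in $\overline{FD}$, then $\phi\vdash\mathtt{Prg}\ \textsc{ok}$. (FT-struct) if $\theta\models\mathrm{AT}(T_i\,m_i)\Rightarrow\mathrm{AT}(T_i)$ for all $i$, then $\theta\vdash\mathtt{struct}\ s\{T_1m_1;\dots;T_km_k;\}\ \textsc{ok}$. (FT-fun) if $\theta\models\mathrm{AT}(T_0)$, $\theta\models\mathrm{AT}(T_i\,x_i)\Rightarrow\mathrm{AT}(T_i)$ for all $i$, $\theta;\ x_1{:}T_1\text{ with }\mathrm{AT}(T_1x_1),\dots,x_k{:}T_k\text{ with }\mathrm{AT}(T_kx_k)\vdash e:T'$ and $T'\le T_0$, then $\theta\vdash T_0\,f(T_1x_1,\dots,T_kx_k)\{\mathtt{return}\ e;\}\ \textsc{ok}$. (FT-int) $\theta;\Delta\vdash n:\mathtt{int}$. (FT-null) $\theta;\Delta\vdash\mathtt{NULL}:\mathtt{void}*$. (FT-par) if $x{:}T$ with $\psi$ is in $\Delta$ and $\theta\models\psi$ then $\theta;\Delta\vdash x:T$. (FT-app) if $\mathtt{Prg}(f)=T_0\,f(T_1x_1,\dots,T_kx_k)\{\dots\}$, $\theta\models\mathrm{AT}(\mathtt{Prg}(f))$, and for $i=1..k$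 (exactly $k$ arguments) $\theta;\Delta\vdash e_i:T_i'$, $T_i'\le T_i$ and $\theta\models\mathrm{AT}(e_i)\Leftrightarrow\mathrm{AT}(T_ix_i)$, then $\theta;\Delta\vdash f(e_1,\dots,e_k):T_0$. (FT-member) if $\theta;\Delta\vdash e_0:\mathtt{struct}\ s*$, $\mathtt{Prg}(s)(m)=T\,m$ and $\theta\models\mathrm{AT}(T\,m)$ then $\theta;\Delta\vdash e_0\texttt{->}m:T$. (FT-assign) if additionally $\theta;\Delta\vdash e_1:T_1$ and $T_1\le T$ then $\theta;\Delta\vdash e_0\texttt{->}m=e_1:T$. (FT-cond), (FT-uop), (FT-bop), (FT-mfree): as T-cond, T-uop, T-bop, T-mfree with every judgment $\Gamma\vdash$ replaced by $\theta;\Delta\vdash$. (FT-seq) if $\theta\models\exists(e_1,\dots,e_n)$, $\theta\,\&\&\,\mathrm{AT}(e_i);\Delta\vdash e_i:T_i$ for all $i$, $T=T_n$, and $\theta\models\mathtt{neverLast}(i,(e_1,\dots,e_n))$ for every $i$ with $T_i\ne T$, then $\theta;\Delta\vdash(e_1,\dots,e_n):T$. (FT-malloc) if $s\in\mathrm{dom}(\overline{SD})$ and $\theta\models\mathrm{AT}(\mathtt{Prg}(s))$ then $\theta;\Delta\vdash\mathtt{MALLOC}(\mathtt{struct}\ s):\mathtt{struct}\ s*$. *)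

theory Defs
  imports Main
begin

section \<open>Lightweight C (LC): syntax\<close>

text \<open>Annotations of annotable fragments are stored inline in the syntax tree, with
  annotation type 'a.  The plain LC code base is obtained by erasing annotations
  (instantiating 'a to unit); LC typing ignores annotations anyway.\<close>

datatype ty = TInt | TVoidPtr | TStructPtr string

datatype uop = UMinus | UNot
datatype bop = BPlus | BMinus | BTimes | BDiv | BAnd | BOr | BLt | BLe | BGt | BGe | BEq | BNeq

datatype 'a expr =
    ENum int
  | ENull
  | EPar string
  | EApp string "('a \<times> 'a expr) list"
  | EMem "'a expr" string
  | EAssign "'a expr" string "'a expr"
  | ECond "'a expr" "'a expr" "'a expr"
  | ESeq "('a \<times> 'a expr) list"
  | EUop uop "'a expr"
  | EBop bop "'a expr" "'a expr"
  | EMalloc string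
  | EMfree "'a expr"

text \<open>struct s {T1 m1; ...}: annotation of the definition, name, member declarations
  (annotation, type, member name).\<close>
datatype 'a sdef = SDef (sd_ann: 'a) (sd_name: string) (sd_members: "('a \<times> ty \<times> string) list")

text \<open>T0 f(T1 x1, ...) {return e;}: annotation, return type, name, parameters
  (annotation, type, parameter name), body.\<close>
datatype 'a fdef = FDef (fd_ann: 'a) (fd_ret: ty) (fd_name: string)
  (fd_params: "('a \<times> ty \<times> string) list") (fd_body: "'a expr")

datatype 'a prog = Prog (prog_structs: "'a sdef list") (prog_funs: "'a fdef list")

definition erase :: "'a prog \<Rightarrow> unit prog" where
  "erase P = map_prog (\<lambda>_. ()) P"

definition struct_names :: "'a prog \<Rightarrow> string set" where
  "struct_names P = set (map sd_name (prog_structs P))"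

definition fun_names :: "'a prog \<Rightarrow> string set" where
  "fun_names P = set (map fd_name (prog_funs P))"

definition struct_of :: "'a prog \<Rightarrow> string \<Rightarrow> 'a sdef option" where
  "struct_of P s = map_of (map (\<lambda>d. (sd_name d, d)) (prog_structs P)) s"

definition fun_of :: "'a prog \<Rightarrow> string \<Rightarrow> 'a fdef option" where
  "fun_of P f = map_of (map (\<lambda>d. (fd_name d, d)) (prog_funs P)) f"

definition member_of :: "'a sdef \<Rightarrow> string \<Rightarrow> ('a \<times> ty) option" where
  "member_of sd m = map_of (map (\<lambda>(a, T, n). (n, (a, T))) (sd_members sd)) m"

definition lc_program :: "'a prog \<Rightarrow> bool" where
  "lc_program P \<longleftrightarrow>
     distinct (map sd_name (prog_structs P)) \<and>
     distinct (map fd_name (prog_funs P)) \<and>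
     (\<forall>sd \<in> set (prog_structs P). distinct (map (\<lambda>(a, T, m). m) (sd_members sd))) \<and>
     (\<forall>fd \<in> set (prog_funs P). distinct (map (\<lambda>(a, T, x). x) (fd_params fd)))"

fun ty_snames :: "ty \<Rightarrow> string set" where
  "ty_snames (TStructPtr s) = {s}"
| "ty_snames _ = {}"

fun expr_snames :: "'a expr \<Rightarrow> string set" where
  "expr_snames (ENum n) = {}"
| "expr_snames ENull = {}"
| "expr_snames (EPar x) = {}"
| "expr_snames (EApp f args) = (\<Union>ae \<in> set args. expr_snames (snd ae))"
| "expr_snames (EMem e m) = expr_snames e"
| "expr_snames (EAssign e0 m e1) = expr_snames e0 \<union> expr_snames e1"
| "expr_snames (ECond e0 e1 e2) = expr_snames e0 \<union> expr_snames e1 \<union> expr_snames e2"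
| "expr_snames (ESeq es) = (\<Union>ae \<in> set es. expr_snames (snd ae))"
| "expr_snames (EUop u e) = expr_snames e"
| "expr_snames (EBop b e1 e2) = expr_snames e1 \<union> expr_snames e2"
| "expr_snames (EMalloc s) = {s}"
| "expr_snames (EMfree e) = expr_snames e"

fun expr_fnames :: "'a expr \<Rightarrow> string set" where
  "expr_fnames (ENum n) = {}"
| "expr_fnames ENull = {}"
| "expr_fnames (EPar x) = {}"
| "expr_fnames (EApp f args) = insert f (\<Union>ae \<in> set args. expr_fnames (snd ae))"
| "expr_fnames (EMem e m) = expr_fnames e"
| "expr_fnames (EAssign e0 m e1) = expr_fnames e0 \<union> expr_fnames e1"
| "expr_fnames (ECond e0 e1 e2) = expr_fnames e0 \<union> expr_fnames e1 \<union> expr_fnames e2"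
| "expr_fnames (ESeq es) = (\<Union>ae \<in> set es. expr_fnames (snd ae))"
| "expr_fnames (EUop u e) = expr_fnames e"
| "expr_fnames (EBop b e1 e2) = expr_fnames e1 \<union> expr_fnames e2"
| "expr_fnames (EMalloc s) = {}"
| "expr_fnames (EMfree e) = expr_fnames e"

definition prog_snames :: "'a prog \<Rightarrow> string set" where
  "prog_snames P =
     (\<Union>sd \<in> set (prog_structs P).
        insert (sd_name sd) (\<Union>(a, T, m) \<in> set (sd_members sd). ty_snames T)) \<union>
     (\<Union>fd \<in> set (prog_funs P).
        ty_snames (fd_ret fd) \<union> (\<Union>(a, T, x) \<in> set (fd_params fd). ty_snames T)
        \<union> expr_snames (fd_body fd))"

definition prog_fnames :: "'a prog \<Rightarrow> string set" where
  "prog_fnames P = (\<Union>fd \<in> set (prog_funs P). insert (fd_name fd) (expr_fnames (fd_body fd)))"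

definition sane :: "'a prog \<Rightarrow> bool" where
  "sane P \<longleftrightarrow>
     prog_snames P \<subseteq> struct_names P \<and>
     prog_fnames P \<subseteq> fun_names P \<and>
     (\<exists>a e. fun_of P ''main'' = Some (FDef a TInt ''main'' [] e))"

definition subty :: "'a prog \<Rightarrow> ty \<Rightarrow> ty \<Rightarrow> bool" where
  "subty P T1 T2 \<longleftrightarrow> T1 = T2 \<or> (T1 = TVoidPtr \<and> (\<exists>s. T2 = TStructPtr s \<and> s \<in> struct_names P))"

definition is_max :: "'a prog \<Rightarrow> ty \<Rightarrow> ty \<Rightarrow> ty \<Rightarrow> bool" where
  "is_max P T1 T2 T3 \<longleftrightarrow> (subty P T1 T2 \<and> T3 = T2) \<or> (subty P T2 T1 \<and> T3 = T1)"

text \<open>uop_ty u T: u has type (T) -> int.\<close>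
fun uop_ty :: "uop \<Rightarrow> ty \<Rightarrow> bool" where
  "uop_ty UMinus T = (T = TInt)"
| "uop_ty UNot T = True"

text \<open>bop_ty b T: b has type (T, T) -> int.\<close>
fun bop_ty :: "bop \<Rightarrow> ty \<Rightarrow> bool" where
  "bop_ty BEq T = True"
| "bop_ty BNeq T = True"
| "bop_ty b T = (T = TInt)"

section \<open>LC typing\<close>

inductive lc_typ :: "'a prog \<Rightarrow> (string \<rightharpoonup> ty) \<Rightarrow> 'a expr \<Rightarrow> ty \<Rightarrow> bool"
  for P :: "'a prog" where
  T_int: "lc_typ P \<Gamma> (ENum n) TInt"
| T_null: "lc_typ P \<Gamma> ENull TVoidPtr"
| T_par: "\<Gamma> x = Some T \<Longrightarrow> lc_typ P \<Gamma> (EPar x) T"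
| T_app: "\<lbrakk> fun_of P f = Some (FDef a T0 f ps body);
            length args = length ps; length Ts = length args;
            \<forall>i < length args. lc_typ P \<Gamma> (snd (args ! i)) (Ts ! i)
                             \<and> subty P (Ts ! i) (fst (snd (ps ! i))) \<rbrakk>
          \<Longrightarrow> lc_typ P \<Gamma> (EApp f args) T0"
| T_member: "\<lbrakk> lc_typ P \<Gamma> e0 (TStructPtr s); struct_of P s = Some sd;
               member_of sd m = Some (a, T) \<rbrakk>
          \<Longrightarrow> lc_typ P \<Gamma> (EMem e0 m) T"
| T_assign: "\<lbrakk> lc_typ P \<Gamma> e0 (TStructPtr s); struct_of P s = Some sd;
               member_of sd m = Some (a, T); lc_typ P \<Gamma> e1 T1; subty P T1 T \<rbrakk>
          \<Longrightarrow> lc_typ P \<Gamma> (EAssign e0 m e1) T"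
| T_cond: "\<lbrakk> lc_typ P \<Gamma> e0 T0; lc_typ P \<Gamma> e1 T1; lc_typ P \<Gamma> e2 T2; is_max P T1 T2 T3 \<rbrakk>
          \<Longrightarrow> lc_typ P \<Gamma> (ECond e0 e1 e2) T3"
| T_seq: "\<lbrakk> es \<noteq> []; length Ts = length es;
            \<forall>i < length es. lc_typ P \<Gamma> (snd (es ! i)) (Ts ! i) \<rbrakk>
          \<Longrightarrow> lc_typ P \<Gamma> (ESeq es) (last Ts)"
| T_uop: "\<lbrakk> lc_typ P \<Gamma> e0 T0; uop_ty u T0 \<rbrakk> \<Longrightarrow> lc_typ P \<Gamma> (EUop u e0) TInt"
| T_bop: "\<lbrakk> lc_typ P \<Gamma> e1 T1; lc_typ P \<Gamma> e2 T2; is_max P T1 T2 T3; bop_ty b T3 \<rbrakk>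
          \<Longrightarrow> lc_typ P \<Gamma> (EBop b e1 e2) TInt"
| T_malloc: "s \<in> struct_names P \<Longrightarrow> lc_typ P \<Gamma> (EMalloc s) (TStructPtr s)"
| T_mfree: "lc_typ P \<Gamma> e0 (TStructPtr s) \<Longrightarrow> lc_typ P \<Gamma> (EMfree e0) TVoidPtr"

definition lc_fun_ok :: "'a prog \<Rightarrow> 'a fdef \<Rightarrow> bool" where
  "lc_fun_ok P fd \<longleftrightarrow>
     (\<exists>T'. lc_typ P (map_of (map (\<lambda>(a, T, x). (x, T)) (fd_params fd))) (fd_body fd) T'
           \<and> subty P T' (fd_ret fd))"

definition lc_prg_ok :: "'a prog \<Rightarrow> bool" where
  "lc_prg_ok P \<longleftrightarrow> sane P \<and> (\<forall>fd \<in> set (prog_funs P). lc_fun_ok P fd)"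

section \<open>Propositional formulas over features\<close>

datatype 'f pform = PVar 'f | PNot "'f pform" | PAnd "'f pform" "'f pform"
  | POr "'f pform" "'f pform" | PConst bool

fun peval :: "('f \<Rightarrow> bool) \<Rightarrow> 'f pform \<Rightarrow> bool" where
  "peval v (PVar x) = v x"
| "peval v (PNot p) = (\<not> peval v p)"
| "peval v (PAnd p q) = (peval v p \<and> peval v q)"
| "peval v (POr p q) = (peval v p \<or> peval v q)"
| "peval v (PConst b) = b"

definition entails :: "'f pform \<Rightarrow> 'f pform \<Rightarrow> bool" where
  "entails \<theta> \<psi> \<longleftrightarrow> (\<forall>v. peval v (POr (PNot \<theta>) \<psi>))"

definition pimp :: "'f pform \<Rightarrow> 'f pform \<Rightarrow> 'f pform" where
  "pimp p q = POr (PNot p) q"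

definition piff :: "'f pform \<Rightarrow> 'f pform \<Rightarrow> 'f pform" where
  "piff p q = PAnd (pimp p q) (pimp q p)"

definition pors :: "'f pform list \<Rightarrow> 'f pform" where
  "pors ps = foldr POr ps (PConst False)"

section \<open>Colored LC (CLC): family-based typing\<close>

fun at_ty :: "'f pform prog \<Rightarrow> ty \<Rightarrow> 'f pform" where
  "at_ty P (TStructPtr s) = (case struct_of P s of Some sd \<Rightarrow> sd_ann sd | None \<Rightarrow> PConst True)"
| "at_ty P _ = PConst True"

definition ex_ann :: "('f pform \<times> 'f pform expr) list \<Rightarrow> 'f pform" where
  "ex_ann es = pors (map fst es)"

text \<open>neverLast(k, (e1,...,en)) with 0-based index k.\<close>
definition never_last :: "nat \<Rightarrow> ('f pform \<times> 'f pform expr) list \<Rightarrow> 'f pform" where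
  "never_last k es = POr (PNot (fst (es ! k))) (pors (map fst (drop (Suc k) es)))"

inductive ft_typ :: "'f pform prog \<Rightarrow> 'f pform \<Rightarrow> (string \<rightharpoonup> ty \<times> 'f pform)
                      \<Rightarrow> 'f pform expr \<Rightarrow> ty \<Rightarrow> bool"
  for P :: "'f pform prog" where
  FT_int: "ft_typ P \<theta> \<Delta> (ENum n) TInt"
| FT_null: "ft_typ P \<theta> \<Delta> ENull TVoidPtr"
| FT_par: "\<lbrakk> \<Delta> x = Some (T, \<psi>); entails \<theta> \<psi> \<rbrakk> \<Longrightarrow> ft_typ P \<theta> \<Delta> (EPar x) T"
| FT_app: "\<lbrakk> fun_of P f = Some (FDef a T0 f ps body); entails \<theta> a;
             length args = length ps; length Ts = length args;
             \<forall>i < length args. ft_typ P \<theta> \<Delta> (snd (args ! i)) (Ts ! i)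
                              \<and> subty P (Ts ! i) (fst (snd (ps ! i)))
                              \<and> entails \<theta> (piff (fst (args ! i)) (fst (ps ! i))) \<rbrakk>
          \<Longrightarrow> ft_typ P \<theta> \<Delta> (EApp f args) T0"
| FT_member: "\<lbrakk> ft_typ P \<theta> \<Delta> e0 (TStructPtr s); struct_of P s = Some sd;
                member_of sd m = Some (a, T); entails \<theta> a \<rbrakk>
          \<Longrightarrow> ft_typ P \<theta> \<Delta> (EMem e0 m) T"
| FT_assign: "\<lbrakk> ft_typ P \<theta> \<Delta> e0 (TStructPtr s); struct_of P s = Some sd;
                member_of sd m = Some (a, T); entails \<theta> a;
                ft_typ P \<theta> \<Delta> e1 T1; subty P T1 T \<rbrakk>
          \<Longrightarrow> ft_typ P \<theta> \<Delta> (EAssign e0 m e1) T"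
| FT_cond: "\<lbrakk> ft_typ P \<theta> \<Delta> e0 T0; ft_typ P \<theta> \<Delta> e1 T1; ft_typ P \<theta> \<Delta> e2 T2;
              is_max P T1 T2 T3 \<rbrakk>
          \<Longrightarrow> ft_typ P \<theta> \<Delta> (ECond e0 e1 e2) T3"
| FT_seq: "\<lbrakk> es \<noteq> []; entails \<theta> (ex_ann es); length Ts = length es;
             \<forall>i < length es. ft_typ P (PAnd \<theta> (fst (es ! i))) \<Delta> (snd (es ! i)) (Ts ! i);
             \<forall>i < length es. Ts ! i \<noteq> last Ts \<longrightarrow> entails \<theta> (never_last i es) \<rbrakk>
          \<Longrightarrow> ft_typ P \<theta> \<Delta> (ESeq es) (last Ts)"
| FT_uop: "\<lbrakk> ft_typ P \<theta> \<Delta> e0 T0; uop_ty u T0 \<rbrakk> \<Longrightarrow> ft_typ P \<theta> \<Delta> (EUop u e0) TInt"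
| FT_bop: "\<lbrakk> ft_typ P \<theta> \<Delta> e1 T1; ft_typ P \<theta> \<Delta> e2 T2; is_max P T1 T2 T3; bop_ty b T3 \<rbrakk>
          \<Longrightarrow> ft_typ P \<theta> \<Delta> (EBop b e1 e2) TInt"
| FT_malloc: "\<lbrakk> s \<in> struct_names P; struct_of P s = Some sd; entails \<theta> (sd_ann sd) \<rbrakk>
          \<Longrightarrow> ft_typ P \<theta> \<Delta> (EMalloc s) (TStructPtr s)"
| FT_mfree: "ft_typ P \<theta> \<Delta> e0 (TStructPtr s) \<Longrightarrow> ft_typ P \<theta> \<Delta> (EMfree e0) TVoidPtr"

definition ft_struct_ok :: "'f pform prog \<Rightarrow> 'f pform \<Rightarrow> 'f pform sdef \<Rightarrow> bool" where
  "ft_struct_ok P \<theta> sd \<longleftrightarrow>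
     (\<forall>(a, T, m) \<in> set (sd_members sd). entails \<theta> (pimp a (at_ty P T)))"

definition ft_fun_ok :: "'f pform prog \<Rightarrow> 'f pform \<Rightarrow> 'f pform fdef \<Rightarrow> bool" where
  "ft_fun_ok P \<theta> fd \<longleftrightarrow>
     entails \<theta> (at_ty P (fd_ret fd)) \<and>
     (\<forall>(a, T, x) \<in> set (fd_params fd). entails \<theta> (pimp a (at_ty P T))) \<and>
     (\<exists>T'. ft_typ P \<theta> (map_of (map (\<lambda>(a, T, x). (x, (T, a))) (fd_params fd))) (fd_body fd) T'
           \<and> subty P T' (fd_ret fd))"

definition ft_prg_ok :: "'f pform \<Rightarrow> 'f pform prog \<Rightarrow> bool" where
  "ft_prg_ok \<phi> P \<longleftrightarrow>
     sane P \<and>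
     (\<forall>fd. fun_of P ''main'' = Some fd \<longrightarrow> fd_ann fd = PConst True) \<and>
     (\<forall>sd \<in> set (prog_structs P). ft_struct_ok P (PAnd \<phi> (sd_ann sd)) sd) \<and>
     (\<forall>fd \<in> set (prog_funs P). ft_fun_ok P (PAnd \<phi> (fd_ann fd)) fd)"

fun pvars :: "'f pform \<Rightarrow> 'f set" where
  "pvars (PVar x) = {x}"
| "pvars (PNot p) = pvars p"
| "pvars (PAnd p q) = pvars p \<union> pvars q"
| "pvars (POr p q) = pvars p \<union> pvars q"
| "pvars (PConst b) = {}"

definition spl :: "'f set \<Rightarrow> 'f pform \<Rightarrow> 'f pform prog \<Rightarrow> bool" where
  "spl F \<phi> P \<longleftrightarrow>
     finite F \<and> pvars \<phi> \<subseteq> F \<and> (\<forall>a \<in> set_prog P. pvars a \<subseteq> F) \<and> lc_program (erase P)"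

end

theory Submission
  imports Defs
begin

text \<open>Every family-based typing rule is the corresponding LC rule plus side conditions
  on presence conditions, and the presence condition never influences the type.  Hence
  erasing the annotations turns every family-based derivation into an LC derivation;
  sanity and all lookups are insensitive to annotations.\<close>

lemma struct_names_map_prog [simp]: "struct_names (map_prog g P) = struct_names P"
  by (cases P) (simp add: struct_names_def comp_def sdef.map_sel)

lemma fun_names_map_prog [simp]: "fun_names (map_prog g P) = fun_names P"
  by (cases P) (simp add: fun_names_def comp_def fdef.map_sel)

lemma subty_map_prog [simp]: "subty (map_prog g P) = subty P"
  by (intro ext) (simp add: subty_def)

lemma is_max_map_prog [simp]: "is_max (map_prog g P) = is_max P"
  by (intro ext) (simp add: is_max_def)

lemma map_of_map_keyed_image:
  "map_of (map (\<lambda>d. (k d, h d)) xs) x = map_option h (map_of (map (\<lambda>d. (k d, d)) xs) x)"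
  by (induction xs) auto

lemma fun_of_map_prog [simp]:
  "fun_of (map_prog g P) f = map_option (map_fdef g) (fun_of P f)"
  by (cases P)
    (simp add: fun_of_def comp_def fdef.map_sel map_of_map_keyed_image[where h = "map_fdef g"])

lemma struct_of_map_prog [simp]:
  "struct_of (map_prog g P) s = map_option (map_sdef g) (struct_of P s)"
  by (cases P)
    (simp add: struct_of_def comp_def sdef.map_sel map_of_map_keyed_image[where h = "map_sdef g"])

lemma member_of_map_sdef [simp]:
  "member_of (map_sdef g sd) m = map_option (map_prod g id) (member_of sd m)"
proof (cases sd)
  case (SDef a s ms)
  show ?thesis
    unfolding SDef member_of_def by (induction ms) auto
qed

lemma expr_snames_map_expr [simp]: "expr_snames (map_expr g e) = expr_snames e"
  by (induction e) auto

lemma expr_fnames_map_expr [simp]: "expr_fnames (map_expr g e) = expr_fnames e"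
  by (induction e) auto

lemma prog_snames_map_prog [simp]: "prog_snames (map_prog g P) = prog_snames P"
  by (cases P) (simp add: prog_snames_def sdef.map_sel fdef.map_sel image_image split_def)

lemma prog_fnames_map_prog [simp]: "prog_fnames (map_prog g P) = prog_fnames P"
  by (cases P) (simp add: prog_fnames_def fdef.map_sel image_image)

lemma sane_map_prog: "sane P \<Longrightarrow> sane (map_prog g P)"
  by (auto simp: sane_def)

lemma ft_typ_imp_lc_typ:
  assumes "ft_typ P \<theta> \<Delta> e T"
  shows "lc_typ (map_prog g P) (map_option fst \<circ> \<Delta>) (map_expr g e) T"
  using assms
proof (induction rule: ft_typ.induct)
  case (FT_app f a T0 ps body \<theta> args Ts \<Delta>)
  then show ?case
    by (auto intro!: lc_typ.T_app[where Ts = Ts] simp: fdef.map_sel)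
next
  case (FT_seq es \<theta> Ts \<Delta>)
  then show ?case
    by (auto intro!: lc_typ.T_seq)
qed (auto intro: lc_typ.intros)

lemma param_env_map_ann:
  "map_option fst \<circ> map_of (map (\<lambda>(a, T, x). (x, (T, a))) ps)
   = map_of (map (\<lambda>(a, T, x). (x, T)) (map (map_prod g id) ps))"
  by (rule ext, induction ps) auto

lemma ft_fun_ok_imp_lc_fun_ok:
  assumes "ft_fun_ok P \<theta> fd"
  shows "lc_fun_ok (map_prog g P) (map_fdef g fd)"
proof -
  obtain T' where
    body: "ft_typ P \<theta> (map_of (map (\<lambda>(a, T, x). (x, (T, a))) (fd_params fd))) (fd_body fd) T'"
    and ret: "subty P T' (fd_ret fd)"
    using assms by (auto simp: ft_fun_ok_def)
  from ft_typ_imp_lc_typ[OF body, of g] ret show ?thesis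
    unfolding lc_fun_ok_def fdef.map_sel subty_map_prog param_env_map_ann[symmetric] by blast
qed

theorem theorem1:
  fixes F :: "'f set" and \<phi> :: "'f pform" and P :: "'f pform prog"
  assumes "spl F \<phi> P"
    and "ft_prg_ok \<phi> P"
  shows "lc_prg_ok (erase P)"
proof -
  have "sane P" and funs_ok: "\<forall>fd \<in> set (prog_funs P). ft_fun_ok P (PAnd \<phi> (fd_ann fd)) fd"
    using assms(2) by (auto simp: ft_prg_ok_def)
  have "prog_funs (erase P) = map (map_fdef (\<lambda>_. ())) (prog_funs P)"
    by (cases P) (simp add: erase_def)
  with funs_ok have "\<forall>fd \<in> set (prog_funs (erase P)). lc_fun_ok (erase P) fd"
    by (auto simp: erase_def intro: ft_fun_ok_imp_lc_fun_ok)
  with sane_map_prog[OF \<open>sane P\<close>] show ?thesis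
    by (simp add: lc_prg_ok_def erase_def)
qed

end
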